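(* Let $n\ge 2$, $d\ge 2$ and $\mathbf{m}\in\mathbb{N}^n$ with $|\mathbf{m}|=d$ and $\max(\mathbf{m})<d-1$. Then $\mathcal{A}_{n,d}\setminus\mathcal{A}_{n,d,\mathbf{m}}=\{\mathbf{m}\}$.
   Context: For $\mathbf{a}\in\mathbb{N}^n$, $|\mathbf{a}|=\sum_i a_i$ and $\max(\mathbf{a})=\max_i a_i$. $T_{n,d}=\{\mathbf{a}\in\mathbb{N}^n:|\mathbf{a}|=d\}$; $\mathcal{A}_{n,d}$ is the (additive) semigroup generated by $T_{n,d}$; for $\mathbf{m}\in T_{n,d}$, $\mathcal{A}_{n,d,\mathbf{m}}$ is the semigroup generated by $T_{n,d}\setminus\{\mathbf{m}\}$. *)

theory Defs
  imports Main
begin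

text \<open>Vectors in N^n are represented as functions nat => nat vanishing outside {..<n}.\<close>

definition abs_vec :: "nat \<Rightarrow> (nat \<Rightarrow> nat) \<Rightarrow> nat" where
  "abs_vec n a = (\<Sum>i<n. a i)"

definition max_vec :: "nat \<Rightarrow> (nat \<Rightarrow> nat) \<Rightarrow> nat" where
  "max_vec n a = Max (a ` {..<n})"

definition T :: "nat \<Rightarrow> nat \<Rightarrow> (nat \<Rightarrow> nat) set" where
  "T n d = {a. (\<forall>i\<ge>n. a i = 0) \<and> abs_vec n a = d}"

inductive_set semigen :: "(nat \<Rightarrow> nat) set \<Rightarrow> (nat \<Rightarrow> nat) set" for S where
  base: "x \<in> S \<Longrightarrow> x \<in> semigen S"
| add: "x \<in> semigen S \<Longrightarrow> y \<in> semigen S \<Longrightarrow> (\<lambda>i. x i + y i) \<in> semigen S"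

definition A :: "nat \<Rightarrow> nat \<Rightarrow> (nat \<Rightarrow> nat) set" where
  "A n d = semigen (T n d)"

definition A_m :: "nat \<Rightarrow> nat \<Rightarrow> (nat \<Rightarrow> nat) \<Rightarrow> (nat \<Rightarrow> nat) set" where
  "A_m n d m = semigen (T n d - {m})"

end

theory Submission
  imports Defs
begin

text \<open>Every element of the semigroup generated by vectors of weight \<open>d\<close> is a generator or has
  weight at least \<open>2 d\<close>; so \<open>m\<close>, of weight \<open>d\<close>, is not generated by the other generators.
  Conversely, \<open>m + g\<close> splits as a sum of two generators different from \<open>m\<close>, for every
  generator \<open>g\<close>: move one unit from \<open>m\<close> to \<open>g\<close> between two coordinates where they differ,
  or between two positive coordinates of \<open>m\<close> if \<open>g = m\<close>; when this split produces \<open>m\<close> itself,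
  a second exchange works because no coordinate of \<open>m\<close> exceeds \<open>d - 2\<close>.
  Hence adjoining \<open>m\<close> as a generator adds no element other than \<open>m\<close> itself.\<close>

definition move_unit :: "(nat \<Rightarrow> nat) \<Rightarrow> nat \<Rightarrow> nat \<Rightarrow> nat \<Rightarrow> nat" where
  "move_unit v j i = v(j := v j - 1, i := Suc (v i))"

lemma sum_lessThan_remove_two:
  fixes f :: "nat \<Rightarrow> 'a::comm_monoid_add"
  assumes "i < n" "j < n" "i \<noteq> j"
  shows "sum f {..<n} = f i + f j + sum f ({..<n} - {i} - {j})"
proof -
  have "sum f {..<n} = f i + sum f ({..<n} - {i})"
    using assms by (simp add: sum.remove)
  also have "sum f ({..<n} - {i}) = f j + sum f ({..<n} - {i} - {j})"
    using assms by (simp add: sum.remove)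
  finally show ?thesis
    by (simp add: add.assoc)
qed

lemma le_max_vec: "k < n \<Longrightarrow> v k \<le> max_vec n v"
  unfolding max_vec_def by (intro Max_ge) auto

lemma move_unit_neq: "i \<noteq> j \<Longrightarrow> move_unit v j i \<noteq> v"
  by (auto simp: move_unit_def fun_eq_iff)

lemma move_unit_in_T:
  assumes "v \<in> T n d" "i < n" "j < n" "i \<noteq> j" "0 < v j"
  shows "move_unit v j i \<in> T n d"
proof -
  let ?w = "move_unit v j i"
  have "sum ?w {..<n} = ?w i + ?w j + sum ?w ({..<n} - {i} - {j})"
    by (rule sum_lessThan_remove_two[OF assms(2-4)])
  also have "sum ?w ({..<n} - {i} - {j}) = sum v ({..<n} - {i} - {j})"
    by (rule sum.cong) (auto simp: move_unit_def)
  also have "?w i + ?w j = v i + v j"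
    using assms by (simp add: move_unit_def)
  also have "v i + v j + sum v ({..<n} - {i} - {j}) = sum v {..<n}"
    using sum_lessThan_remove_two[OF assms(2-4)] by metis
  finally show ?thesis
    using assms by (auto simp: T_def abs_vec_def move_unit_def)
qed

lemma T_ex_less:
  assumes "a \<in> T n d" "b \<in> T n d" "a \<noteq> b"
  obtains i where "i < n" "a i < b i"
proof -
  obtain k where k: "a k \<noteq> b k"
    using assms(3) by auto
  have "k < n"
  proof (rule ccontr)
    assume "\<not> k < n"
    then have "a k = 0" "b k = 0"
      using assms(1,2) by (auto simp: T_def)
    then show False
      using k by simp
  qed
  have "\<exists>i<n. a i < b i"
  proof (rule ccontr)
    assume "\<not> (\<exists>i<n. a i < b i)"
    then have le: "\<forall>i\<in>{..<n}. b i \<le> a i"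
      using leI by blast
    then have "b k < a k"
      using k \<open>k < n\<close> by (simp add: order.not_eq_order_implies_strict)
    then have "sum b {..<n} < sum a {..<n}"
      using le \<open>k < n\<close> by (intro sum_strict_mono_ex1) auto
    then show False
      using assms(1,2) by (simp add: T_def abs_vec_def)
  qed
  then show thesis
    using that by blast
qed

lemma T_two_positive_coords:
  assumes "v \<in> T n d" "0 < d" "\<And>k. k < n \<Longrightarrow> v k < d"
  obtains i j where "i < n" "j < n" "i \<noteq> j" "0 < v i" "0 < v j"
proof -
  have sum_v: "sum v {..<n} = d"
    using assms(1) by (simp add: T_def abs_vec_def)
  then obtain i where i: "i < n" "0 < v i"
    using assms(2) sum.not_neutral_contains_not_neutral[of v "{..<n}"] by auto
  have "sum v {..<n} = v i + sum v ({..<n} - {i})"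
    using i by (simp add: sum.remove)
  then have "sum v ({..<n} - {i}) \<noteq> 0"
    using sum_v assms(3)[OF i(1)] by linarith
  then obtain j where "j < n" "j \<noteq> i" "0 < v j"
    using sum.not_neutral_contains_not_neutral[of v "{..<n} - {i}"] by auto
  then show thesis
    using that i by blast
qed

lemma semigen_mem_or_double_weight:
  assumes "x \<in> semigen S" "\<And>s. s \<in> S \<Longrightarrow> abs_vec n s = d"
  shows "x \<in> S \<or> 2 * d \<le> abs_vec n x"
  using assms(1)
proof induction
  case (add x y)
  have "abs_vec n (\<lambda>i. x i + y i) = abs_vec n x + abs_vec n y"
    by (simp add: abs_vec_def sum.distrib)
  moreover have "d \<le> abs_vec n x" "d \<le> abs_vec n y"
    using add.IH assms(2) by auto
  ultimately show ?case
    by simp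
qed simp

lemma semigen_mono: "x \<in> semigen S \<Longrightarrow> S \<subseteq> S' \<Longrightarrow> x \<in> semigen S'"
  by (induction rule: semigen.induct) (auto intro: semigen.intros)

lemma semigen_insert_subset:
  assumes "\<And>s. s \<in> insert m S \<Longrightarrow> (\<lambda>i. m i + s i) \<in> semigen S"
  shows "semigen (insert m S) \<subseteq> insert m (semigen S)"
proof -
  have m_plus: "(\<lambda>i. m i + y i) \<in> semigen S" if "y \<in> semigen S" for y
    using that
  proof induction
    case (add x y)
    have "(\<lambda>i. m i + (x i + y i)) = (\<lambda>i. (m i + x i) + y i)"
      by (simp add: add.assoc)
    then show ?case
      using add semigen.add by metis
  qed (use assms in blast)
  have "x \<in> insert m (semigen S)" if "x \<in> semigen (insert m S)" for x
    using that
  proof induction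
    case (add x y)
    have comm: "(\<lambda>i. x i + m i) = (\<lambda>i. m i + x i)"
      by (simp add: add.commute)
    from add show ?case
      using assms m_plus comm by (auto intro: semigen.add)
  qed (auto intro: semigen.base)
  then show ?thesis
    by blast
qed

lemma add_in_A_m:
  assumes "a \<in> T n d" "b \<in> T n d" "a \<noteq> m" "b \<noteq> m"
  shows "(\<lambda>i. a i + b i) \<in> A_m n d m"
  unfolding A_m_def using assms by (auto intro: semigen.intros)

lemma double_in_A_m:
  assumes m: "m \<in> T n d" and "0 < d" and bound: "\<And>k. k < n \<Longrightarrow> m k + 2 \<le> d"
  shows "(\<lambda>i. m i + m i) \<in> A_m n d m"
proof -
  have "m k < d" if "k < n" for k
    using bound[OF that] by simp
  then obtain i j where ij: "i < n" "j < n" "i \<noteq> j" "0 < m i" "0 < m j"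
    using T_two_positive_coords[OF m \<open>0 < d\<close>] by blast
  have "move_unit m j i \<in> T n d" "move_unit m i j \<in> T n d"
    using move_unit_in_T[OF m] ij by auto
  then have "(\<lambda>t. move_unit m j i t + move_unit m i j t) \<in> A_m n d m"
    using ij move_unit_neq add_in_A_m by metis
  moreover have "(\<lambda>t. move_unit m j i t + move_unit m i j t) = (\<lambda>t. m t + m t)"
    using ij by (auto simp: move_unit_def fun_eq_iff)
  ultimately show ?thesis
    by simp
qed

lemma plus_move_unit_in_A_m:
  assumes m: "m \<in> T n d" and bound: "\<And>k. k < n \<Longrightarrow> m k + 2 \<le> d"
    and ij: "i < n" "j < n" "i \<noteq> j" "0 < m j"
  shows "(\<lambda>t. m t + move_unit m j i t) \<in> A_m n d m"
proof (cases "\<exists>k<n. k \<noteq> i \<and> k \<noteq> j \<and> 0 < m k")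
  case True
  then obtain k where k: "k < n" "k \<noteq> i" "k \<noteq> j" "0 < m k"
    by auto
  have "move_unit m j k \<in> T n d" "move_unit m k i \<in> T n d"
    using move_unit_in_T[OF m] ij k by auto
  then have "(\<lambda>t. move_unit m j k t + move_unit m k i t) \<in> A_m n d m"
    using ij k move_unit_neq add_in_A_m by metis
  moreover have "(\<lambda>t. move_unit m j k t + move_unit m k i t) = (\<lambda>t. m t + move_unit m j i t)"
    using ij k by (auto simp: move_unit_def fun_eq_iff)
  ultimately show ?thesis
    by simp
next
  case False
  then have "sum m ({..<n} - {i} - {j}) = 0"
    by (auto intro: sum.neutral)
  then have "m i + m j = d"
    using sum_lessThan_remove_two[OF ij(1-3), of m] m by (simp add: T_def abs_vec_def)
  then have mi: "2 \<le> m i" and mj: "2 \<le> m j"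
    using bound[OF ij(1)] bound[OF ij(2)] by auto
  have "move_unit m j i \<in> T n d"
    using move_unit_in_T[OF m] ij by auto
  moreover have "0 < move_unit m j i j"
    using ij mj by (simp add: move_unit_def)
  ultimately have "move_unit (move_unit m j i) j i \<in> T n d"
    using move_unit_in_T ij by blast
  moreover have "move_unit m i j \<in> T n d"
    using move_unit_in_T[OF m] ij mi by auto
  moreover have "move_unit (move_unit m j i) j i \<noteq> m" "move_unit m i j \<noteq> m"
    using ij by (auto simp: move_unit_def fun_eq_iff)
  ultimately have "(\<lambda>t. move_unit (move_unit m j i) j i t + move_unit m i j t) \<in> A_m n d m"
    by (rule add_in_A_m)
  moreover have "(\<lambda>t. move_unit (move_unit m j i) j i t + move_unit m i j t)
      = (\<lambda>t. m t + move_unit m j i t)"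
    using ij mi mj by (auto simp: move_unit_def fun_eq_iff)
  ultimately show ?thesis
    by simp
qed

lemma plus_generator_in_A_m:
  assumes m: "m \<in> T n d" and "0 < d" and bound: "\<And>k. k < n \<Longrightarrow> m k + 2 \<le> d"
    and g: "g \<in> T n d"
  shows "(\<lambda>t. m t + g t) \<in> A_m n d m"
proof (cases "g = m")
  case True
  then show ?thesis
    using double_in_A_m[OF m \<open>0 < d\<close> bound] by simp
next
  case False
  obtain i where i: "i < n" "m i < g i"
    using T_ex_less[OF m g] False by metis
  obtain j where j: "j < n" "g j < m j"
    using T_ex_less[OF g m] False by metis
  have ij: "i \<noteq> j"
    using i j by auto
  have split: "(\<lambda>t. m t + g t) = (\<lambda>t. move_unit m j i t + move_unit g i j t)"
    using i j ij by (auto simp: move_unit_def fun_eq_iff)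
  show ?thesis
  proof (cases "move_unit g i j = m")
    case False
    moreover have "move_unit m j i \<in> T n d" "move_unit g i j \<in> T n d"
      using move_unit_in_T[OF m] move_unit_in_T[OF g] i j ij by auto
    ultimately show ?thesis
      unfolding split using ij move_unit_neq add_in_A_m by metis
  next
    case True
    have "(\<lambda>t. m t + move_unit m j i t) \<in> A_m n d m"
      using plus_move_unit_in_A_m[OF m bound i(1) j(1) ij] j(2) by simp
    then show ?thesis
      unfolding split True by (simp add: add.commute)
  qed
qed

theorem lemma2p17:
  fixes n d :: nat and m :: "nat \<Rightarrow> nat"
  assumes "n \<ge> 2" and "d \<ge> 2" and "m \<in> T n d" and "max_vec n m < d - 1"
  shows "A n d - A_m n d m = {m}"
proof -
  have bound: "m k + 2 \<le> d" if "k < n" for k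
    using le_max_vec[OF that, of m] assms(2,4) by linarith
  have generators: "insert m (T n d - {m}) = T n d"
    using assms(3) by blast
  have "(\<lambda>i. m i + g i) \<in> semigen (T n d - {m})" if "g \<in> T n d" for g
    using plus_generator_in_A_m[OF assms(3) _ bound that] assms(2)
    unfolding A_m_def by simp
  then have "semigen (insert m (T n d - {m})) \<subseteq> insert m (semigen (T n d - {m}))"
    by (intro semigen_insert_subset) (use assms(3) in blast)
  then have "A n d \<subseteq> insert m (A_m n d m)"
    unfolding A_def A_m_def generators .
  moreover have "m \<notin> A_m n d m"
  proof
    assume "m \<in> A_m n d m"
    then have "m \<in> T n d - {m} \<or> 2 * d \<le> abs_vec n m"
      unfolding A_m_def by (rule semigen_mem_or_double_weight) (simp add: T_def)
    then show False
      using assms(2,3) by (simp add: T_def)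
  qed
  moreover have "m \<in> A n d"
    unfolding A_def using assms(3) by (rule semigen.base)
  moreover have "A_m n d m \<subseteq> A n d"
    unfolding A_def A_m_def using semigen_mono by blast
  ultimately show ?thesis
    by blast
qed

end
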